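(* Let $(I,d,(I_n)_n)$ be a uniform metric index set, $W$ a compact Hausdorff space and $m:X^{\mathbb{R}}\to C^*(W)$ a sequence measure function with associated operator measure function $\overline{m}$. Then for any two non-expansive operators $T_1,T_2\in B(\ell^2(I))$, $\overline{m}(T_1T_2)=\overline{m}(T_2T_1)$.
   Context: $I$ is countable with nested finite subsets $I_1\subset I_2\subset\cdots$, $\bigcup_nI_n=I$, and a quasi-distance $d$ (i.e. $d\ge0$, $d(i,i)=0$, symmetric, triangle inequality); $B_R(i)=\{j:d(j,i)\le R\}$. $(I,d,(I_n))$ is a uniform metric index set if $\sup_i|B_R(i)|<\infty$ for all $R>0$ and $\lim_{n\to\infty}|(\bigcup_{j\in I\setminus I_n}B_R(j))\cap I_n|/|I_n|=0$ for all $R>0$. $\{\delta_i\}$ is the canonical basis of $\ell^2(I)$; $A\in B(\ell^2(I))$ is row non-expansive if for every $\varepsilon>0$ there is $N$ with $\sum_{j\notin B_N(i)}|\langle A\delta_i,\delta_j\rangle|^2<\varepsilon$ for all $i$, and non-expansive if $A$ and $A^*$ are row non-expansive. Frame compatible sequences: nonnegative $\mathbf{x}$ with $0\le x_1\le|I_1|$, $0\le x_i-x_{i-1}\le|I_i\setminus I_{i-1}|$; $X$ their set, $X^+=\{c\mathbf{x}\}_{c\ge0}$, $X^{\mathbb{R}}=X^+-X^+$. $\mathbf{x}\approx\mathbf{y}$ iff $\lim(x_n-y_n)/|I_n|=0$; $\mathbf{y}\leqq\mathbf{x}$ iff $\liminf(x_n-y_n)/|I_n|\ge0$. $C^*(W)$: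 real continuous functions on $W$. A sequence measure function is a linear $m:X^{\mathbb{R}}\to C^*(W)$ with $m(\mathbf{x})=m(\mathbf{y})\iff\mathbf{x}\approx\mathbf{y}$ on $X^{\mathbb{R}}$, $m(\mathbf{x})\le m(\mathbf{y})\iff\mathbf{x}\leqq\mathbf{y}$ on $X^+$, and $m((|I_1|,|I_2|,\dots))=1$. For $T\in B(\ell^2(I))$ let $b(T)=(\sum_{i\in I_n}\langle T\delta_i,\delta_i\rangle)_n$; its real and imaginary parts lie in $X^{\mathbb{R}}$. The operator measure function is $\overline{m}(T)=m(\operatorname{Re}b(T))+i\,m(\operatorname{Im}b(T))$ (a complex-valued continuous function on $W$). *)

theory Defs
  imports "HOL-Analysis.Analysis"
begin

text \<open>The countable index set I is the universe of a countable type 'i.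
  The nested finite subsets I_1 \<subseteq> I_2 \<subseteq> ... are given by Is :: nat \<Rightarrow> 'i set,
  where Is 0 plays the role of I_1, Is 1 of I_2, etc.\<close>

definition ball_q :: "('i \<Rightarrow> 'i \<Rightarrow> real) \<Rightarrow> real \<Rightarrow> 'i \<Rightarrow> 'i set" where
  "ball_q d R i = {j. d j i \<le> R}"

definition quasi_distance :: "('i \<Rightarrow> 'i \<Rightarrow> real) \<Rightarrow> bool" where
  "quasi_distance d \<longleftrightarrow>
     (\<forall>i j. d i j \<ge> 0) \<and> (\<forall>i. d i i = 0) \<and> (\<forall>i j. d i j = d j i) \<and>
     (\<forall>i j k. d i k \<le> d i j + d j k)"

definition nested_exhaustion :: "(nat \<Rightarrow> 'i set) \<Rightarrow> bool" where
  "nested_exhaustion Is \<longleftrightarrow>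
     (\<forall>n. finite (Is n)) \<and> (\<forall>n. Is n \<subseteq> Is (Suc n)) \<and> (\<Union>n. Is n) = UNIV"

definition uniform_metric_index_set ::
  "('i::countable \<Rightarrow> 'i \<Rightarrow> real) \<Rightarrow> (nat \<Rightarrow> 'i set) \<Rightarrow> bool" where
  "uniform_metric_index_set d Is \<longleftrightarrow>
     quasi_distance d \<and> nested_exhaustion Is \<and>
     (\<forall>R>0. \<exists>M::nat. \<forall>i. finite (ball_q d R i) \<and> card (ball_q d R i) \<le> M) \<and>
     (\<forall>R>0. (\<lambda>n. real (card ((\<Union>j\<in>UNIV - Is n. ball_q d R j) \<inter> Is n)) / real (card (Is n)))
              \<longlonglongrightarrow> 0)"

definition frame_compatible :: "(nat \<Rightarrow> 'i set) \<Rightarrow> (nat \<Rightarrow> real) \<Rightarrow> bool" where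
  "frame_compatible Is x \<longleftrightarrow>
     0 \<le> x 0 \<and> x 0 \<le> real (card (Is 0)) \<and>
     (\<forall>n. 0 \<le> x (Suc n) - x n \<and> x (Suc n) - x n \<le> real (card (Is (Suc n) - Is n)))"

definition Xset :: "(nat \<Rightarrow> 'i set) \<Rightarrow> (nat \<Rightarrow> real) set" where
  "Xset Is = {x. frame_compatible Is x}"

definition Xplus :: "(nat \<Rightarrow> 'i set) \<Rightarrow> (nat \<Rightarrow> real) set" where
  "Xplus Is = {(\<lambda>n. c * x n) | c x. c \<ge> 0 \<and> x \<in> Xset Is}"

definition XR :: "(nat \<Rightarrow> 'i set) \<Rightarrow> (nat \<Rightarrow> real) set" where
  "XR Is = {(\<lambda>n. x n - y n) | x y. x \<in> Xplus Is \<and> y \<in> Xplus Is}"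

definition seq_approx :: "(nat \<Rightarrow> 'i set) \<Rightarrow> (nat \<Rightarrow> real) \<Rightarrow> (nat \<Rightarrow> real) \<Rightarrow> bool" where
  "seq_approx Is x y \<longleftrightarrow> (\<lambda>n. (x n - y n) / real (card (Is n))) \<longlonglongrightarrow> 0"

text \<open>seq_leqq Is y x  means  y \<leqq> x, i.e. liminf (x_n - y_n)/|I_n| \<ge> 0.\<close>
definition seq_leqq :: "(nat \<Rightarrow> 'i set) \<Rightarrow> (nat \<Rightarrow> real) \<Rightarrow> (nat \<Rightarrow> real) \<Rightarrow> bool" where
  "seq_leqq Is y x \<longleftrightarrow>
     liminf (\<lambda>n. ereal ((x n - y n) / real (card (Is n)))) \<ge> 0"

text \<open>W is the universe of a type 'w carrying a Hausdorff topology with compact universe;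
  C*(W) is the set of real-valued continuous functions on W.\<close>

definition sequence_measure_function ::
  "(nat \<Rightarrow> 'i set) \<Rightarrow> ((nat \<Rightarrow> real) \<Rightarrow> ('w::topological_space \<Rightarrow> real)) \<Rightarrow> bool" where
  "sequence_measure_function Is m \<longleftrightarrow>
     (\<forall>x\<in>XR Is. continuous_on UNIV (m x)) \<and>
     (\<forall>x\<in>XR Is. \<forall>y\<in>XR Is. \<forall>a b::real.
        m (\<lambda>n. a * x n + b * y n) = (\<lambda>w. a * m x w + b * m y w)) \<and>
     (\<forall>x\<in>XR Is. \<forall>y\<in>XR Is. m x = m y \<longleftrightarrow> seq_approx Is x y) \<and>
     (\<forall>x\<in>Xplus Is. \<forall>y\<in>Xplus Is. (\<forall>w. m x w \<le> m y w) \<longleftrightarrow> seq_leqq Is x y) \<and>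
     m (\<lambda>n. real (card (Is n))) = (\<lambda>w. 1)"

definition ell2 :: "('i \<Rightarrow> complex) set" where
  "ell2 = {f. (\<lambda>i. (cmod (f i))\<^sup>2) summable_on UNIV}"

definition l2norm :: "('i \<Rightarrow> complex) \<Rightarrow> real" where
  "l2norm f = sqrt (infsum (\<lambda>i. (cmod (f i))\<^sup>2) UNIV)"

definition l2inner :: "('i \<Rightarrow> complex) \<Rightarrow> ('i \<Rightarrow> complex) \<Rightarrow> complex" where
  "l2inner f g = infsum (\<lambda>i. f i * cnj (g i)) UNIV"

definition delta :: "'i \<Rightarrow> 'i \<Rightarrow> complex" where
  "delta i = (\<lambda>j. if j = i then 1 else 0)"

text \<open>A bounded operator on l^2(I) is represented by a function on 'i \<Rightarrow> complex,
  of which only the restriction to ell2 is relevant.\<close>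
definition bounded_op :: "(('i \<Rightarrow> complex) \<Rightarrow> ('i \<Rightarrow> complex)) \<Rightarrow> bool" where
  "bounded_op T \<longleftrightarrow>
     (\<forall>f\<in>ell2. T f \<in> ell2) \<and>
     (\<forall>f\<in>ell2. \<forall>g\<in>ell2. T (\<lambda>i. f i + g i) = (\<lambda>i. T f i + T g i)) \<and>
     (\<forall>f\<in>ell2. \<forall>c. T (\<lambda>i. c * f i) = (\<lambda>i. c * T f i)) \<and>
     (\<exists>K. \<forall>f\<in>ell2. l2norm (T f) \<le> K * l2norm f)"

definition is_adjoint :: "(('i \<Rightarrow> complex) \<Rightarrow> ('i \<Rightarrow> complex)) \<Rightarrow> (('i \<Rightarrow> complex) \<Rightarrow> ('i \<Rightarrow> complex)) \<Rightarrow> bool" where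
  "is_adjoint T S \<longleftrightarrow> bounded_op S \<and>
     (\<forall>f\<in>ell2. \<forall>g\<in>ell2. l2inner (T f) g = l2inner f (S g))"

definition row_nonexpansive ::
  "('i \<Rightarrow> 'i \<Rightarrow> real) \<Rightarrow> (('i \<Rightarrow> complex) \<Rightarrow> ('i \<Rightarrow> complex)) \<Rightarrow> bool" where
  "row_nonexpansive d A \<longleftrightarrow>
     (\<forall>\<epsilon>>0. \<exists>N::real. \<forall>i.
        infsum (\<lambda>j. (cmod (l2inner (A (delta i)) (delta j)))\<^sup>2) (UNIV - ball_q d N i) < \<epsilon>)"

definition nonexpansive ::
  "('i \<Rightarrow> 'i \<Rightarrow> real) \<Rightarrow> (('i \<Rightarrow> complex) \<Rightarrow> ('i \<Rightarrow> complex)) \<Rightarrow> bool" where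
  "nonexpansive d A \<longleftrightarrow> bounded_op A \<and> row_nonexpansive d A \<and>
     (\<exists>S. is_adjoint A S \<and> row_nonexpansive d S)"

definition diag_seq :: "(nat \<Rightarrow> 'i set) \<Rightarrow> (('i \<Rightarrow> complex) \<Rightarrow> ('i \<Rightarrow> complex)) \<Rightarrow> nat \<Rightarrow> complex" where
  "diag_seq Is T = (\<lambda>n. \<Sum>i\<in>Is n. l2inner (T (delta i)) (delta i))"

definition op_measure ::
  "(nat \<Rightarrow> 'i set) \<Rightarrow> ((nat \<Rightarrow> real) \<Rightarrow> ('w \<Rightarrow> real)) \<Rightarrow>
   (('i \<Rightarrow> complex) \<Rightarrow> ('i \<Rightarrow> complex)) \<Rightarrow> 'w \<Rightarrow> complex" where
  "op_measure Is m T = (\<lambda>w. complex_of_real (m (\<lambda>n. Re (diag_seq Is T n)) w)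
                           + \<i> * complex_of_real (m (\<lambda>n. Im (diag_seq Is T n)) w))"

end

theory Submission
  imports Defs
begin

(* With S1 the adjoint of T1, put P i j = (T2 delta_i) j * cnj ((S1 delta_i) j). The diagonal
   entries of T1 T2 are the row sums of P and those of T2 T1 are its column sums, so on the window
   I_n the two partial traces differ only by the entries of P linking I_n to its complement.
   Row non-expansiveness of T1 and T2 makes these contributions uniformly small for i at distance
   more than R from the complement, and boundedness makes them uniformly bounded for the remaining
   i, which form the R-boundary of I_n, of density tending to zero. So the diagonal sequences
   differ by o(|I_n|), and m identifies such sequences. *)

lemma mult_le_weighted_squares:
  fixes a b t :: real
  assumes "0 < t"
  shows "a * b \<le> (t * a\<^sup>2 + b\<^sup>2 / t) / 2"
proof -
  have "0 \<le> (t * a - b)\<^sup>2 / t" using assms by simp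
  also have "(t * a - b)\<^sup>2 / t = t * a\<^sup>2 + b\<^sup>2 / t - 2 * (a * b)"
    using assms by (simp add: field_simps power2_eq_square)
  finally show ?thesis by (simp add: field_simps)
qed

lemma summable_on_mult_cnj:
  fixes f g :: "'i \<Rightarrow> complex"
  assumes "(\<lambda>j. (cmod (f j))\<^sup>2) summable_on J" and "(\<lambda>j. (cmod (g j))\<^sup>2) summable_on J"
  shows "(\<lambda>j. f j * cnj (g j)) summable_on J"
proof -
  have "(\<lambda>j. (1/2) * ((cmod (f j))\<^sup>2 + (cmod (g j))\<^sup>2)) summable_on J"
    using assms by (intro summable_on_add summable_on_cmult_right)
  then have "(\<lambda>j. norm (f j * cnj (g j))) summable_on J"
  proof (rule summable_on_comparison_test)
    fix j
    show "norm (f j * cnj (g j)) \<le> (1/2) * ((cmod (f j))\<^sup>2 + (cmod (g j))\<^sup>2)"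
      using mult_le_weighted_squares[of 1 "cmod (f j)" "cmod (g j)"] by (simp add: norm_mult)
  qed simp
  then show ?thesis by (rule abs_summable_summable)
qed

lemma norm_infsum_mult_cnj_le:
  fixes f g :: "'i \<Rightarrow> complex"
  assumes f: "(\<lambda>j. (cmod (f j))\<^sup>2) summable_on J" and g: "(\<lambda>j. (cmod (g j))\<^sup>2) summable_on J"
    and t: "0 < t"
  shows "cmod (infsum (\<lambda>j. f j * cnj (g j)) J)
           \<le> (t * infsum (\<lambda>j. (cmod (f j))\<^sup>2) J + infsum (\<lambda>j. (cmod (g j))\<^sup>2) J / t) / 2"
proof -
  let ?h = "\<lambda>j. (t / 2) * (cmod (f j))\<^sup>2 + (1 / (2 * t)) * (cmod (g j))\<^sup>2"
  have h: "?h summable_on J"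
    using f g by (intro summable_on_add summable_on_cmult_right)
  have "cmod (infsum (\<lambda>j. f j * cnj (g j)) J) \<le> infsum ?h J"
  proof (rule norm_infsum_le[OF has_sum_infsum has_sum_infsum])
    show "(\<lambda>j. f j * cnj (g j)) summable_on J" using f g by (rule summable_on_mult_cnj)
    show "?h summable_on J" by (rule h)
    fix j
    show "cmod (f j * cnj (g j)) \<le> ?h j"
      using mult_le_weighted_squares[OF t, of "cmod (f j)" "cmod (g j)"]
      by (simp add: norm_mult field_simps)
  qed
  also have "infsum ?h J = infsum (\<lambda>j. (t / 2) * (cmod (f j))\<^sup>2) J
                         + infsum (\<lambda>j. (1 / (2 * t)) * (cmod (g j))\<^sup>2) J"
    by (intro infsum_add summable_on_cmult_right f g)
  also have "\<dots> = (t / 2) * infsum (\<lambda>j. (cmod (f j))\<^sup>2) J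
                   + (1 / (2 * t)) * infsum (\<lambda>j. (cmod (g j))\<^sup>2) J"
    by (simp only: infsum_cmult_right')
  finally show ?thesis by (simp add: field_simps)
qed

lemma l2inner_delta_right: "l2inner h (delta i) = h i"
proof -
  have "l2inner h (delta i) = infsum (\<lambda>j. h j * cnj (delta i j)) {i}"
    unfolding l2inner_def by (rule infsum_cong_neutral) (auto simp: delta_def)
  then show ?thesis by (simp add: delta_def)
qed

lemma l2inner_delta_left: "l2inner (delta i) h = cnj (h i)"
proof -
  have "l2inner (delta i) h = infsum (\<lambda>j. delta i j * cnj (h j)) {i}"
    unfolding l2inner_def by (rule infsum_cong_neutral) (auto simp: delta_def)
  then show ?thesis by (simp add: delta_def)
qed

lemma has_sum_delta_squares: "((\<lambda>j. (cmod (delta i j))\<^sup>2) has_sum 1) UNIV"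
proof -
  have "((\<lambda>j. (cmod (delta i j))\<^sup>2) has_sum 1) {i}"
    by (rule has_sum_finiteI) (auto simp: delta_def)
  then show ?thesis
    by (rule has_sum_cong_neutral[THEN iffD1, rotated -1]) (auto simp: delta_def)
qed

lemma delta_ell2: "delta i \<in> ell2"
  using has_sum_delta_squares[of i] by (auto simp: ell2_def summable_on_def)

lemma l2norm_delta: "l2norm (delta i) = 1"
  using infsumI[OF has_sum_delta_squares] unfolding l2norm_def by simp

lemma bounded_op_ell2: "bounded_op T \<Longrightarrow> f \<in> ell2 \<Longrightarrow> T f \<in> ell2"
  by (simp add: bounded_op_def)

lemma bounded_op_delta_summable_sq:
  assumes "bounded_op T"
  shows "(\<lambda>j. (cmod (T (delta i) j))\<^sup>2) summable_on J"
proof -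
  have "(\<lambda>j. (cmod (T (delta i) j))\<^sup>2) summable_on UNIV"
    using bounded_op_ell2[OF assms delta_ell2] unfolding ell2_def by simp
  then show ?thesis by (rule summable_on_subset_banach) simp
qed

lemma bounded_op_delta_sq_bound:
  assumes "bounded_op T"
  shows "\<exists>K. \<forall>i J. infsum (\<lambda>j. (cmod (T (delta i) j))\<^sup>2) J \<le> K"
proof -
  obtain K where K: "\<And>f. f \<in> ell2 \<Longrightarrow> l2norm (T f) \<le> K * l2norm f"
    using assms unfolding bounded_op_def by blast
  have "infsum (\<lambda>j. (cmod (T (delta i) j))\<^sup>2) J \<le> K\<^sup>2" for i J
  proof -
    have "infsum (\<lambda>j. (cmod (T (delta i) j))\<^sup>2) J \<le> infsum (\<lambda>j. (cmod (T (delta i) j))\<^sup>2) UNIV"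
      by (rule infsum_mono2) (auto intro: bounded_op_delta_summable_sq[OF assms])
    also have "\<dots> \<le> K\<^sup>2"
      using K[OF delta_ell2, of i] unfolding l2norm_delta by (intro sqrt_le_D) (simp add: l2norm_def)
    finally show ?thesis .
  qed
  then show ?thesis by blast
qed

lemma is_adjoint_bounded_op: "is_adjoint T S \<Longrightarrow> bounded_op S"
  by (simp add: is_adjoint_def)

lemma is_adjoint_l2inner:
  "is_adjoint T S \<Longrightarrow> f \<in> ell2 \<Longrightarrow> g \<in> ell2 \<Longrightarrow> l2inner (T f) g = l2inner f (S g)"
  by (simp add: is_adjoint_def)

lemma is_adjoint_delta_entry:
  assumes "is_adjoint T S"
  shows "T (delta i) j = cnj (S (delta j) i)"
  using is_adjoint_l2inner[OF assms delta_ell2 delta_ell2, of i j]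
  by (simp add: l2inner_delta_right l2inner_delta_left)

lemma l2inner_comp_delta:
  assumes "is_adjoint T1 S1" and "bounded_op T2"
  shows "l2inner ((T1 \<circ> T2) (delta i)) (delta i)
           = infsum (\<lambda>j. T2 (delta i) j * cnj (S1 (delta i) j)) UNIV"
  using is_adjoint_l2inner[OF assms(1) bounded_op_ell2[OF assms(2) delta_ell2] delta_ell2]
  by (simp add: l2inner_def)

lemma norm_infsum_mult_cnj_delta_bounded:
  assumes "bounded_op T" and "bounded_op S"
  shows "\<exists>C. \<forall>i J. cmod (infsum (\<lambda>j. T (delta i) j * cnj (S (delta i) j)) J) \<le> C"
proof -
  obtain KT where KT: "\<And>i J. infsum (\<lambda>j. (cmod (T (delta i) j))\<^sup>2) J \<le> KT"
    using bounded_op_delta_sq_bound[OF assms(1)] by blast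
  obtain KS where KS: "\<And>i J. infsum (\<lambda>j. (cmod (S (delta i) j))\<^sup>2) J \<le> KS"
    using bounded_op_delta_sq_bound[OF assms(2)] by blast
  have "cmod (infsum (\<lambda>j. T (delta i) j * cnj (S (delta i) j)) J) \<le> (KT + KS) / 2" for i J
    using norm_infsum_mult_cnj_le[where t = 1, OF bounded_op_delta_summable_sq[OF assms(1), of i J]
        bounded_op_delta_summable_sq[OF assms(2), of i J]] KT[of i J] KS[of i J]
    by simp
  then show ?thesis by blast
qed

definition rows_localized :: "('i \<Rightarrow> 'i \<Rightarrow> real) \<Rightarrow> ('i \<Rightarrow> 'i \<Rightarrow> complex) \<Rightarrow> bool" where
  "rows_localized d P \<longleftrightarrow>
     (\<forall>i. P i summable_on UNIV) \<and>
     (\<exists>C. \<forall>i J. cmod (infsum (P i) J) \<le> C) \<and>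
     (\<forall>\<delta>>0. \<exists>R. \<forall>i J. J \<inter> ball_q d R i = {} \<longrightarrow> cmod (infsum (P i) J) \<le> \<delta>)"

lemma rows_localized_summable: "rows_localized d P \<Longrightarrow> P i summable_on UNIV"
  by (simp add: rows_localized_def)

lemma rows_localized_bound:
  assumes "rows_localized d P"
  obtains C where "\<And>i J. cmod (infsum (P i) J) \<le> C"
  using assms unfolding rows_localized_def by blast

lemma rows_localized_tail:
  assumes "rows_localized d P" and "\<delta> > 0"
  obtains R where "\<And>i J. J \<inter> ball_q d R i = {} \<Longrightarrow> cmod (infsum (P i) J) \<le> \<delta>"
  using assms unfolding rows_localized_def by blast

lemma rows_localized_mult_cnj:
  assumes T: "bounded_op T" and S: "bounded_op S" and row: "row_nonexpansive d T"
  shows "rows_localized d (\<lambda>i j. T (delta i) j * cnj (S (delta i) j))"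
proof -
  have sT: "(\<lambda>j. (cmod (T (delta i) j))\<^sup>2) summable_on J" for i J
    using T by (rule bounded_op_delta_summable_sq)
  have sS: "(\<lambda>j. (cmod (S (delta i) j))\<^sup>2) summable_on J" for i J
    using S by (rule bounded_op_delta_summable_sq)
  obtain KS where KS: "\<And>i J. infsum (\<lambda>j. (cmod (S (delta i) j))\<^sup>2) J \<le> KS"
    using bounded_op_delta_sq_bound[OF S] by blast
  have tails: "\<exists>R. \<forall>i J. J \<inter> ball_q d R i = {} \<longrightarrow>
                 cmod (infsum (\<lambda>j. T (delta i) j * cnj (S (delta i) j)) J) \<le> \<delta>"
    if \<delta>: "\<delta> > 0" for \<delta>
  proof -
    define C where "C = max KS 1"
    have C: "C > 0" unfolding C_def by simp
    obtain R where R: "\<And>i. infsum (\<lambda>j. (cmod (T (delta i) j))\<^sup>2) (UNIV - ball_q d R i) < \<delta>\<^sup>2 / C"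
      using row C \<delta> unfolding row_nonexpansive_def l2inner_delta_right by (meson divide_pos_pos zero_less_power)
    have "cmod (infsum (\<lambda>j. T (delta i) j * cnj (S (delta i) j)) J) \<le> \<delta>"
      if J: "J \<inter> ball_q d R i = {}" for i J
    proof -
      have "infsum (\<lambda>j. (cmod (T (delta i) j))\<^sup>2) J
              \<le> infsum (\<lambda>j. (cmod (T (delta i) j))\<^sup>2) (UNIV - ball_q d R i)"
        by (rule infsum_mono2) (use J sT in auto)
      with R have TJ: "infsum (\<lambda>j. (cmod (T (delta i) j))\<^sup>2) J \<le> \<delta>\<^sup>2 / C"
        by (meson less_imp_le order_trans)
      have SJ: "infsum (\<lambda>j. (cmod (S (delta i) j))\<^sup>2) J \<le> C"
        using KS[of i J] unfolding C_def by linarith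
      \<comment> \<open>the weight C / delta balances the small tail of T against the bounded column of S\<close>
      have "cmod (infsum (\<lambda>j. T (delta i) j * cnj (S (delta i) j)) J)
              \<le> (C / \<delta> * infsum (\<lambda>j. (cmod (T (delta i) j))\<^sup>2) J
                  + infsum (\<lambda>j. (cmod (S (delta i) j))\<^sup>2) J / (C / \<delta>)) / 2"
        using C \<delta> by (intro norm_infsum_mult_cnj_le sT sS) simp
      also have "\<dots> \<le> (C / \<delta> * (\<delta>\<^sup>2 / C) + C / (C / \<delta>)) / 2"
        using C \<delta> TJ SJ by (intro divide_right_mono add_mono mult_left_mono) simp_all
      also have "\<dots> = \<delta>"
        using C \<delta> by (simp add: field_simps power2_eq_square)
      finally show ?thesis .
    qed
    then show ?thesis by blast
  qed
  show ?thesis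
    unfolding rows_localized_def
    using summable_on_mult_cnj[OF sT sS] norm_infsum_mult_cnj_delta_bounded[OF T S] tails
    by blast
qed

definition inner_boundary :: "('i \<Rightarrow> 'i \<Rightarrow> real) \<Rightarrow> real \<Rightarrow> 'i set \<Rightarrow> 'i set" where
  "inner_boundary d R F = (\<Union>j\<in>UNIV - F. ball_q d R j) \<inter> F"

lemma compl_disjoint_ball_outside_inner_boundary:
  assumes "quasi_distance d" and "i \<in> F" and "i \<notin> inner_boundary d R F"
  shows "- F \<inter> ball_q d R i = {}"
  using assms unfolding inner_boundary_def ball_q_def quasi_distance_def by fastforce

lemma ball_q_mono: "R \<le> R' \<Longrightarrow> ball_q d R i \<subseteq> ball_q d R' i"
  unfolding ball_q_def by auto

lemma infsum_split_finite:
  fixes g :: "'i \<Rightarrow> 'a::banach"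
  assumes "g summable_on UNIV" and "finite F"
  shows "infsum g UNIV = sum g F + infsum g (- F)"
proof -
  have "infsum g (F \<union> - F) = infsum g F + infsum g (- F)"
    by (rule infsum_Un_disjoint) (auto intro: summable_on_subset_banach[OF assms(1)])
  then show ?thesis
    using assms(2) by simp
qed

lemma sum_infsum_rows_minus_columns:
  fixes P :: "'i \<Rightarrow> 'i \<Rightarrow> 'a::banach"
  assumes F: "finite F"
    and rows: "\<And>i. P i summable_on UNIV" and cols: "\<And>i. (\<lambda>j. P j i) summable_on UNIV"
  shows "(\<Sum>i\<in>F. infsum (P i) UNIV) - (\<Sum>i\<in>F. infsum (\<lambda>j. P j i) UNIV)
           = (\<Sum>i\<in>F. infsum (P i) (- F) - infsum (\<lambda>j. P j i) (- F))"
proof -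
  have "(\<Sum>i\<in>F. infsum (P i) UNIV) = (\<Sum>i\<in>F. \<Sum>j\<in>F. P i j) + (\<Sum>i\<in>F. infsum (P i) (- F))"
    unfolding infsum_split_finite[OF rows F] by (rule sum.distrib)
  moreover have "(\<Sum>i\<in>F. infsum (\<lambda>j. P j i) UNIV)
                   = (\<Sum>i\<in>F. \<Sum>j\<in>F. P j i) + (\<Sum>i\<in>F. infsum (\<lambda>j. P j i) (- F))"
    unfolding infsum_split_finite[OF cols F] by (rule sum.distrib)
  moreover have "(\<Sum>i\<in>F. \<Sum>j\<in>F. P j i) = (\<Sum>i\<in>F. \<Sum>j\<in>F. P i j)"
    by (rule sum.swap)
  ultimately show ?thesis
    by (simp add: sum_subtractf)
qed

lemma norm_sum_offdiag_tails_le: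
  fixes P :: "'i \<Rightarrow> 'i \<Rightarrow> 'a::real_normed_vector"
  assumes d: "quasi_distance d" and F: "finite F"
    and row_bound: "\<And>i J. norm (infsum (P i) J) \<le> C1"
    and col_bound: "\<And>i J. norm (infsum (\<lambda>j. P j i) J) \<le> C2"
    and row_tail: "\<And>i J. J \<inter> ball_q d R i = {} \<Longrightarrow> norm (infsum (P i) J) \<le> \<delta>"
    and col_tail: "\<And>i J. J \<inter> ball_q d R i = {} \<Longrightarrow> norm (infsum (\<lambda>j. P j i) J) \<le> \<delta>"
  shows "norm (\<Sum>i\<in>F. infsum (P i) (- F) - infsum (\<lambda>j. P j i) (- F))
           \<le> (C1 + C2) * card (inner_boundary d R F) + 2 * \<delta> * card F"
proof -
  let ?B = "inner_boundary d R F"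
  have "\<delta> \<ge> 0"
    using row_tail[of "{}"] by simp
  have entry: "norm (infsum (P i) (- F) - infsum (\<lambda>j. P j i) (- F))
                 \<le> (if i \<in> ?B then C1 + C2 else 0) + 2 * \<delta>" if "i \<in> F" for i
  proof -
    have "norm (infsum (P i) (- F) - infsum (\<lambda>j. P j i) (- F))
            \<le> norm (infsum (P i) (- F)) + norm (infsum (\<lambda>j. P j i) (- F))"
      by (rule norm_triangle_ineq4)
    also have "\<dots> \<le> (if i \<in> ?B then C1 + C2 else \<delta> + \<delta>)"
    proof (cases "i \<in> ?B")
      case True
      then show ?thesis
        using row_bound col_bound by (simp add: add_mono)
    next
      case False
      then have "- F \<inter> ball_q d R i = {}"
        by (rule compl_disjoint_ball_outside_inner_boundary[OF d \<open>i \<in> F\<close>])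
      with False show ?thesis
        using add_mono[OF row_tail col_tail] by simp
    qed
    finally show ?thesis
      using \<open>\<delta> \<ge> 0\<close> by (simp split: if_splits)
  qed
  have "norm (\<Sum>i\<in>F. infsum (P i) (- F) - infsum (\<lambda>j. P j i) (- F))
          \<le> (\<Sum>i\<in>F. (if i \<in> ?B then C1 + C2 else 0) + 2 * \<delta>)"
    using entry by (intro order_trans[OF norm_sum sum_mono])
  also have "\<dots> = (C1 + C2) * card (F \<inter> ?B) + 2 * \<delta> * card F"
    using F by (simp add: sum.distrib sum.If_cases)
  also have "F \<inter> ?B = ?B"
    unfolding inner_boundary_def by blast
  finally show ?thesis .
qed

lemma LIMSEQ_ratio_zeroI:
  fixes u :: "nat \<Rightarrow> 'a::real_normed_field" and c :: "nat \<Rightarrow> nat"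
  assumes "\<And>e. e > 0 \<Longrightarrow>
             \<exists>b. (\<lambda>n. b n / real (c n)) \<longlonglongrightarrow> 0 \<and> (\<forall>n. norm (u n) \<le> b n + e * real (c n))"
  shows "(\<lambda>n. u n / of_nat (c n)) \<longlonglongrightarrow> 0"
proof (rule tendstoI)
  fix r :: real
  assume r: "r > 0"
  then obtain b where b: "(\<lambda>n. b n / real (c n)) \<longlonglongrightarrow> 0"
    and u: "\<And>n. norm (u n) \<le> b n + r / 2 * real (c n)"
    using assms[of "r / 2"] by auto
  have "eventually (\<lambda>n. b n / real (c n) < r / 2) sequentially"
    by (rule order_tendstoD(2)[OF b]) (use r in simp)
  then show "eventually (\<lambda>n. dist (u n / of_nat (c n)) 0 < r) sequentially"
  proof (rule eventually_mono)
    fix n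
    assume small: "b n / real (c n) < r / 2"
    show "dist (u n / of_nat (c n)) 0 < r"
    proof (cases "c n = 0")
      case True
      with r show ?thesis by simp
    next
      case False
      have "dist (u n / of_nat (c n)) 0 = norm (u n) / real (c n)"
        by (simp add: norm_divide)
      also have "\<dots> \<le> (b n + r / 2 * real (c n)) / real (c n)"
        using u by (rule divide_right_mono) simp
      also have "\<dots> = b n / real (c n) + r / 2"
        using False by (simp add: field_simps)
      also have "\<dots> < r"
        using small by linarith
      finally show ?thesis .
    qed
  qed
qed

lemma rows_localized_trace_commutator_density:
  assumes U: "uniform_metric_index_set d Is"
    and P: "rows_localized d P" and PT: "rows_localized d (\<lambda>i j. P j i)"
  shows "(\<lambda>n. ((\<Sum>i\<in>Is n. infsum (P i) UNIV) - (\<Sum>i\<in>Is n. infsum (\<lambda>j. P j i) UNIV))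
               / of_nat (card (Is n))) \<longlonglongrightarrow> 0"
proof (rule LIMSEQ_ratio_zeroI)
  have d: "quasi_distance d"
    using U by (simp add: uniform_metric_index_set_def)
  have fin: "finite (Is n)" for n
    using U by (simp add: uniform_metric_index_set_def nested_exhaustion_def)
  have boundary: "(\<lambda>n. real (card (inner_boundary d R (Is n))) / card (Is n)) \<longlonglongrightarrow> 0"
    if "R > 0" for R
    using U that by (simp add: uniform_metric_index_set_def inner_boundary_def)
  have rows: "P i summable_on UNIV" and cols: "(\<lambda>j. P j i) summable_on UNIV" for i
    using rows_localized_summable[OF P] rows_localized_summable[OF PT] .
  obtain C1 C2 where C1: "\<And>i J. cmod (infsum (P i) J) \<le> C1"
    and C2: "\<And>i J. cmod (infsum (\<lambda>j. P j i) J) \<le> C2"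
    using rows_localized_bound[OF P] rows_localized_bound[OF PT] by metis
  fix e :: real
  assume "e > 0"
  then obtain R1 R2 where R1: "\<And>i J. J \<inter> ball_q d R1 i = {} \<Longrightarrow> cmod (infsum (P i) J) \<le> e / 2"
    and R2: "\<And>i J. J \<inter> ball_q d R2 i = {} \<Longrightarrow> cmod (infsum (\<lambda>j. P j i) J) \<le> e / 2"
    using rows_localized_tail[OF P] rows_localized_tail[OF PT] half_gt_zero by metis
  define R where "R = max (max R1 R2) 1"
  have "R1 \<le> R" "R2 \<le> R"
    unfolding R_def by simp_all
  then have disjoint: "J \<inter> ball_q d R1 i = {}" "J \<inter> ball_q d R2 i = {}" if "J \<inter> ball_q d R i = {}" for i J
    using that ball_q_mono[of R1 R d i] ball_q_mono[of R2 R d i] by blast+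
  define b where "b n = (C1 + C2) * card (inner_boundary d R (Is n))" for n
  have "(\<lambda>n. b n / real (card (Is n))) \<longlonglongrightarrow> 0"
    unfolding b_def times_divide_eq_right[symmetric]
    by (rule tendsto_mult_right_zero, rule boundary) (simp add: R_def)
  moreover have "cmod ((\<Sum>i\<in>Is n. infsum (P i) UNIV) - (\<Sum>i\<in>Is n. infsum (\<lambda>j. P j i) UNIV))
                   \<le> b n + e * card (Is n)" for n
  proof -
    have "cmod (\<Sum>i\<in>Is n. infsum (P i) (- Is n) - infsum (\<lambda>j. P j i) (- Is n))
            \<le> (C1 + C2) * card (inner_boundary d R (Is n)) + 2 * (e / 2) * card (Is n)"
      by (rule norm_sum_offdiag_tails_le[OF d fin C1 C2 R1[OF disjoint(1)] R2[OF disjoint(2)]])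
    then show ?thesis
      unfolding sum_infsum_rows_minus_columns[OF fin rows cols] b_def by simp
  qed
  ultimately show "\<exists>b. (\<lambda>n. b n / real (card (Is n))) \<longlonglongrightarrow> 0 \<and>
      (\<forall>n. cmod ((\<Sum>i\<in>Is n. infsum (P i) UNIV) - (\<Sum>i\<in>Is n. infsum (\<lambda>j. P j i) UNIV))
             \<le> b n + e * card (Is n))"
    by blast
qed

lemma sum_in_Xset:
  fixes h :: "'i \<Rightarrow> real"
  assumes N: "nested_exhaustion Is" and h: "\<And>i. 0 \<le> h i" "\<And>i. h i \<le> 1"
  shows "(\<lambda>n. \<Sum>i\<in>Is n. h i) \<in> Xset Is"
proof -
  have fin: "finite (Is n)" and sub: "Is n \<subseteq> Is (Suc n)" for n
    using N unfolding nested_exhaustion_def by blast+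
  have bounds: "0 \<le> sum h A" "sum h A \<le> card A" if "finite A" for A
    using sum_nonneg[of A h] sum_bounded_above[of A h 1] h by auto
  have increment: "sum h (Is (Suc n)) - sum h (Is n) = sum h (Is (Suc n) - Is n)" for n
    using sum.subset_diff[OF sub fin, of h n] by simp
  show ?thesis
    unfolding Xset_def mem_Collect_eq frame_compatible_def increment
    using fin by (simp add: bounds)
qed

lemma sum_in_Xplus:
  fixes h :: "'i \<Rightarrow> real"
  assumes N: "nested_exhaustion Is" and h: "\<And>i. 0 \<le> h i" "\<And>i. h i \<le> L"
  shows "(\<lambda>n. \<Sum>i\<in>Is n. h i) \<in> Xplus Is"
proof -
  define c where "c = max L 1"
  have c: "c > 0" "\<And>i. h i \<le> c" using h unfolding c_def by (auto simp: le_max_iff_disj)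
  have "(\<lambda>n. \<Sum>i\<in>Is n. h i / c) \<in> Xset Is"
    using c h by (intro sum_in_Xset[OF N]) auto
  moreover have "(\<lambda>n. \<Sum>i\<in>Is n. h i) = (\<lambda>n. c * (\<Sum>i\<in>Is n. h i / c))"
    using c by (simp add: sum_distrib_left)
  ultimately show ?thesis
    unfolding Xplus_def using c(1) by (intro CollectI exI[of _ c]) auto
qed

lemma sum_in_XR:
  fixes g :: "'i \<Rightarrow> real"
  assumes N: "nested_exhaustion Is" and g: "\<And>i. \<bar>g i\<bar> \<le> K"
  shows "(\<lambda>n. \<Sum>i\<in>Is n. g i) \<in> XR Is"
proof -
  have shifted: "0 \<le> g i + K" "g i + K \<le> 2 * K" for i
    using g[of i] by linarith+
  have "K \<ge> 0"
    using g[of undefined] by linarith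
  have "(\<lambda>n. \<Sum>i\<in>Is n. g i + K) \<in> Xplus Is"
    using shifted by (rule sum_in_Xplus[OF N])
  moreover have "(\<lambda>n. \<Sum>i\<in>Is n. K) \<in> Xplus Is"
    using \<open>K \<ge> 0\<close> by (intro sum_in_Xplus[OF N, where L = K]) auto
  moreover have "(\<lambda>n. \<Sum>i\<in>Is n. g i) = (\<lambda>n. (\<Sum>i\<in>Is n. g i + K) - (\<Sum>i\<in>Is n. K))"
    by (simp add: sum.distrib)
  ultimately show ?thesis
    unfolding XR_def mem_Collect_eq
    by (intro exI[of _ "\<lambda>n. \<Sum>i\<in>Is n. g i + K"] exI[of _ "\<lambda>n. \<Sum>i\<in>Is n. K"]) simp
qed

lemma diag_seq_Re_Im_in_XR:
  assumes N: "nested_exhaustion Is" and T: "\<And>i. cmod (l2inner (T (delta i)) (delta i)) \<le> K"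
  shows "(\<lambda>n. Re (diag_seq Is T n)) \<in> XR Is" and "(\<lambda>n. Im (diag_seq Is T n)) \<in> XR Is"
  unfolding diag_seq_def Re_sum Im_sum
  by (rule sum_in_XR[OF N], rule order_trans[OF abs_Re_le_cmod T])
    (rule sum_in_XR[OF N], rule order_trans[OF abs_Im_le_cmod T])

lemma op_measure_eq_if_diag_density_zero:
  assumes m: "sequence_measure_function Is m" and N: "nested_exhaustion Is"
    and A: "\<And>i. cmod (l2inner (A (delta i)) (delta i)) \<le> KA"
    and B: "\<And>i. cmod (l2inner (B (delta i)) (delta i)) \<le> KB"
    and density: "(\<lambda>n. (diag_seq Is A n - diag_seq Is B n) / of_nat (card (Is n))) \<longlonglongrightarrow> 0"
  shows "op_measure Is m A = op_measure Is m B"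
proof -
  have m_eq: "m x = m y" if "x \<in> XR Is" "y \<in> XR Is" "seq_approx Is x y" for x y
    using m that unfolding sequence_measure_function_def by blast
  have Re: "m (\<lambda>n. Re (diag_seq Is A n)) = m (\<lambda>n. Re (diag_seq Is B n))"
    using tendsto_Re[OF density]
    by (intro m_eq diag_seq_Re_Im_in_XR(1)[OF N A] diag_seq_Re_Im_in_XR(1)[OF N B])
      (simp add: seq_approx_def)
  have Im: "m (\<lambda>n. Im (diag_seq Is A n)) = m (\<lambda>n. Im (diag_seq Is B n))"
    using tendsto_Im[OF density]
    by (intro m_eq diag_seq_Re_Im_in_XR(2)[OF N A] diag_seq_Re_Im_in_XR(2)[OF N B])
      (simp add: seq_approx_def)
  show ?thesis
    unfolding op_measure_def Re Im ..
qed

lemma comp_diag_bounded: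
  assumes "is_adjoint T1 S1" and "bounded_op T2"
  shows "\<exists>K. \<forall>i. cmod (l2inner ((T1 \<circ> T2) (delta i)) (delta i)) \<le> K"
  using norm_infsum_mult_cnj_delta_bounded[OF assms(2) is_adjoint_bounded_op[OF assms(1)]]
  unfolding l2inner_comp_delta[OF assms] by blast

lemma diag_seq_commutator_density:
  assumes U: "uniform_metric_index_set d Is"
    and T1: "bounded_op T1" "row_nonexpansive d T1" "is_adjoint T1 S1"
    and T2: "bounded_op T2" "row_nonexpansive d T2" "is_adjoint T2 S2"
  shows "(\<lambda>n. (diag_seq Is (T1 \<circ> T2) n - diag_seq Is (T2 \<circ> T1) n) / of_nat (card (Is n)))
           \<longlonglongrightarrow> 0"
proof -
  define P where "P = (\<lambda>i j. T2 (delta i) j * cnj (S1 (delta i) j))"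
  have transpose: "(\<lambda>i j. P j i) = (\<lambda>i j. T1 (delta i) j * cnj (S2 (delta i) j))"
    using is_adjoint_delta_entry[OF T1(3)] is_adjoint_delta_entry[OF T2(3)]
    by (simp add: P_def fun_eq_iff mult.commute)
  then have column: "(\<lambda>j. P j i) = (\<lambda>j. T1 (delta i) j * cnj (S2 (delta i) j))" for i
    by meson
  have "rows_localized d P"
    unfolding P_def using T2(1,2) is_adjoint_bounded_op[OF T1(3)] by (intro rows_localized_mult_cnj)
  moreover have "rows_localized d (\<lambda>i j. P j i)"
    unfolding transpose using T1(1,2) is_adjoint_bounded_op[OF T2(3)] by (intro rows_localized_mult_cnj)
  ultimately have "(\<lambda>n. ((\<Sum>i\<in>Is n. infsum (P i) UNIV) - (\<Sum>i\<in>Is n. infsum (\<lambda>j. P j i) UNIV))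
                     / of_nat (card (Is n))) \<longlonglongrightarrow> 0"
    by (rule rows_localized_trace_commutator_density[OF U])
  moreover have "diag_seq Is (T1 \<circ> T2) = (\<lambda>n. \<Sum>i\<in>Is n. infsum (P i) UNIV)"
    and "diag_seq Is (T2 \<circ> T1) = (\<lambda>n. \<Sum>i\<in>Is n. infsum (\<lambda>j. P j i) UNIV)"
    unfolding diag_seq_def l2inner_comp_delta[OF T1(3) T2(1)] l2inner_comp_delta[OF T2(3) T1(1)]
      column by (simp_all add: P_def)
  ultimately show ?thesis
    by simp
qed

theorem lemma7p13:
  fixes d :: "'i::countable \<Rightarrow> 'i \<Rightarrow> real"
    and Is :: "nat \<Rightarrow> 'i set"
    and m :: "(nat \<Rightarrow> real) \<Rightarrow> ('w::t2_space \<Rightarrow> real)"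
    and T1 T2 :: "('i \<Rightarrow> complex) \<Rightarrow> ('i \<Rightarrow> complex)"
  assumes "uniform_metric_index_set d Is"
    and "compact (UNIV :: 'w set)"
    and "sequence_measure_function Is m"
    and "nonexpansive d T1"
    and "nonexpansive d T2"
  shows "op_measure Is m (T1 \<circ> T2) = op_measure Is m (T2 \<circ> T1)"
proof -
  obtain S1 where T1: "bounded_op T1" "row_nonexpansive d T1" "is_adjoint T1 S1"
    using assms(4) unfolding nonexpansive_def by blast
  obtain S2 where T2: "bounded_op T2" "row_nonexpansive d T2" "is_adjoint T2 S2"
    using assms(5) unfolding nonexpansive_def by blast
  obtain K12 K21
    where K12: "\<And>i. cmod (l2inner ((T1 \<circ> T2) (delta i)) (delta i)) \<le> K12"
      and K21: "\<And>i. cmod (l2inner ((T2 \<circ> T1) (delta i)) (delta i)) \<le> K21"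
    using comp_diag_bounded[OF T1(3) T2(1)] comp_diag_bounded[OF T2(3) T1(1)] by blast
  have N: "nested_exhaustion Is"
    using assms(1) by (simp add: uniform_metric_index_set_def)
  show ?thesis
    using op_measure_eq_if_diag_density_zero[OF assms(3) N K12 K21]
      diag_seq_commutator_density[OF assms(1) T1 T2] .
qed

end
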